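(* Let $\xi$ be a complex random variable with $\mathbb{E}\xi=0$, $\mathbb{E}|\xi|^2=1$ and $\mathbb{E}|\xi|^{4+\epsilon}<\infty$ for some $\epsilon>0$; let $b_n$ divide $n$, let $\tilde X$ be the $n\times n$ periodic block band matrix with atom variable $\xi$ and bandwidth $b_n$, and $X=\tilde X/\sqrt{3b_n}$. For fixed $z\in\mathbb{C}$ and $\zeta$ with $\Im\zeta>0$, let $P_{z,\zeta}:=(X-zI)(X-zI)^*-\zeta I$. Then for all $1\le i\le n$, $$\mathbb{E}\big[(P_{z,\zeta})^{-1}_{ii}\big]=\mathbb{E}\big[(P_{z,\zeta})^{-1}_{11}\big].$$
   Context: Periodic block band matrix: $m:=n/b_n$; $\tilde D_i,\tilde U_i,\tilde T_i$ ($i\in[m]$) are $3m$ independent $b_n\times b_n$ random matrices with iid entries distributed as $\xi$; $\tilde X$ is the $m\times m$ block matrix (blocks $b_n\times b_n$, block indices modulo $m$) with $(i,i)$ block $\tilde D_i$, $(i,i-1)$ block $\tilde T_{i-1}$, $(i,i+1)$ block $\tilde U_{i+1}$, other blocks zero. *)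

theory Defs
  imports "HOL-Probability.Probability" "Jordan_Normal_Form.Schur_Decomposition"
          "Jordan_Normal_Form.Gauss_Jordan_Elimination"
begin

text \<open>Entries of the building blocks: E (k, i, a, c) is the (a,c) entry of the
  i-th block of kind k, where kind 0 = D, kind 1 = U, kind 2 = T.
  Indices are 0-based: blocks i < m, entries a, c < b.\<close>

definition block_index_set :: "nat \<Rightarrow> nat \<Rightarrow> (nat \<times> nat \<times> nat \<times> nat) set" where
  "block_index_set m b = {0..<3} \<times> {0..<m} \<times> {0..<b} \<times> {0..<b}"

text \<open>The (i,i) block is D_i,
  the (i,i-1) block is T_{i-1}, the (i,i+1) block is U_{i+1} (indices mod m);
  contributions are added if these positions coincide (m \<le> 2).\<close>

definition periodic_band :: "nat \<Rightarrow> nat \<Rightarrow> (nat \<times> nat \<times> nat \<times> nat \<Rightarrow> complex) \<Rightarrow> complex mat" where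
  "periodic_band n b e = (let m = n div b in
     mat n n (\<lambda>(r, s).
       let i = r div b; j = s div b; a = r mod b; c = s mod b;
           im = (i + m - 1) mod m; ip = (i + 1) mod m in
       (if j = i then e (0, i, a, c) else 0)
     + (if j = im then e (2, im, a, c) else 0)
     + (if j = ip then e (1, ip, a, c) else 0)))"

definition resolvent_P :: "complex mat \<Rightarrow> complex \<Rightarrow> complex \<Rightarrow> complex mat" where
  "resolvent_P X z \<zeta> = (let n = dim_row X; Y = X - z \<cdot>\<^sub>m 1\<^sub>m n in
      the (mat_inverse (Y * mat_adjoint Y - \<zeta> \<cdot>\<^sub>m 1\<^sub>m n)))"

end

theory Submission
  imports Defs "HOL-Number_Theory.Cong"
begin

text \<open>
  Write \<open>n = m b\<close> and index the rows by pairs (block, position in the block). Rotating the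
  blocks by \<open>p\<close> and the positions inside every block by \<open>q\<close> is a permutation \<open>\<sigma>\<close> of the rows,
  and conjugating the periodic band matrix by \<open>\<sigma>\<close> yields the periodic band matrix built from the
  same entries with rotated labels. As the entries are iid, this relabelling preserves their joint
  law. On the other hand \<open>(X - z)(X - z)\<^sup>* - \<zeta>\<close> is invertible for \<open>Im \<zeta> \<noteq> 0\<close>, and its inverse
  is conjugated by \<open>\<sigma>\<close> as well. Choosing \<open>\<sigma> 0 = i\<close>, the \<open>(i, i)\<close> and \<open>(0, 0)\<close> entries of the
  resolvent therefore have the same law.
\<close>

lemma dim_mat_adjoint [simp]:
  "dim_row (mat_adjoint A) = dim_col A" "dim_col (mat_adjoint A) = dim_row A"
  by (simp_all add: mat_adjoint_def)

lemma mat_adjoint_carrier: "A \<in> carrier_mat n k \<Longrightarrow> mat_adjoint A \<in> carrier_mat k n"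
  unfolding carrier_mat_def by simp

lemma index_mat_adjoint [simp]:
  "i < dim_col A \<Longrightarrow> j < dim_row A \<Longrightarrow> mat_adjoint A $$ (i, j) = conjugate (A $$ (j, i))"
  by (simp add: mat_adjoint_def mat_of_rows_index)

lemma scalar_prod_mat_adjoint:
  fixes Y :: "complex mat"
  assumes "Y \<in> carrier_mat n k" and "v \<in> carrier_vec n" and "w \<in> carrier_vec k"
  shows "scalar_prod (conjugate v) (Y *\<^sub>v w) = scalar_prod (conjugate (mat_adjoint Y *\<^sub>v v)) w"
proof -
  have "scalar_prod (conjugate v) (Y *\<^sub>v w) = (\<Sum>r<n. \<Sum>u<k. cnj (v $ r) * Y $$ (r, u) * w $ u)"
    using assms by (simp add: scalar_prod_def sum_distrib_left atLeast0LessThan mult.assoc)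
  also have "\<dots> = (\<Sum>u<k. \<Sum>r<n. cnj (v $ r) * Y $$ (r, u) * w $ u)"
    by (rule sum.swap)
  also have "\<dots> = scalar_prod (conjugate (mat_adjoint Y *\<^sub>v v)) w"
    using assms by (simp add: scalar_prod_def sum_distrib_left sum_distrib_right atLeast0LessThan
        mult.commute mult.left_commute)
  finally show ?thesis .
qed

text \<open>If \<open>(Y Y\<^sup>* - \<zeta>) v = 0\<close> then \<open>\<zeta> |v|\<^sup>2 = |Y\<^sup>* v|\<^sup>2\<close>, so \<open>v = 0\<close> unless \<open>\<zeta>\<close> is real.\<close>
lemma det_gram_minus_nonreal_nonzero:
  fixes Y :: "complex mat"
  assumes Y: "Y \<in> carrier_mat n n" and \<zeta>: "Im \<zeta> \<noteq> 0"
  shows "det (Y * mat_adjoint Y - \<zeta> \<cdot>\<^sub>m 1\<^sub>m n) \<noteq> 0"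
proof
  let ?B = "Y * mat_adjoint Y - \<zeta> \<cdot>\<^sub>m 1\<^sub>m n"
  assume "det ?B = 0"
  moreover have "?B \<in> carrier_mat n n"
    by (intro minus_carrier_mat) simp
  ultimately obtain v where v: "v \<in> carrier_vec n" "v \<noteq> 0\<^sub>v n" and Bv: "?B *\<^sub>v v = 0\<^sub>v n"
    using det_0_iff_vec_prod_zero by blast
  define w where "w = mat_adjoint Y *\<^sub>v v"
  have w: "w \<in> carrier_vec n"
    unfolding w_def using mat_adjoint_carrier[OF Y] v(1) by (rule mult_mat_vec_carrier)
  have "(\<zeta> \<cdot>\<^sub>m 1\<^sub>m n) *\<^sub>v v = \<zeta> \<cdot>\<^sub>v v"
    using v by (intro eq_vecI) auto
  moreover have "?B *\<^sub>v v = (Y * mat_adjoint Y) *\<^sub>v v - (\<zeta> \<cdot>\<^sub>m 1\<^sub>m n) *\<^sub>v v"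
    using mult_carrier_mat[OF Y mat_adjoint_carrier[OF Y]] v(1)
    by (intro minus_mult_distrib_mat_vec[of _ n n]) simp_all
  ultimately have "?B *\<^sub>v v = Y *\<^sub>v w - \<zeta> \<cdot>\<^sub>v v"
    using Y v mat_adjoint_carrier[OF Y] by (simp add: w_def)
  moreover have "Y *\<^sub>v w \<in> carrier_vec n"
    using Y w by (rule mult_mat_vec_carrier)
  ultimately have "conjugate v \<bullet> (Y *\<^sub>v w) - \<zeta> * (conjugate v \<bullet> v) = conjugate v \<bullet> (?B *\<^sub>v v)"
    using v by (simp add: scalar_prod_minus_distrib[of _ n])
  then have "conjugate v \<bullet> (Y *\<^sub>v w) = \<zeta> * (conjugate v \<bullet> v)"
    using Bv v by simp
  then have "w \<bullet>c w = \<zeta> * (v \<bullet>c v)"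
    using scalar_prod_mat_adjoint[OF Y v(1) w] conjugate_vec_sprod_comm[OF v(1) v(1)]
      conjugate_vec_sprod_comm[OF w w] by (simp add: w_def)
  moreover have "w \<bullet>c w \<ge> 0" and "v \<bullet>c v > 0"
    using v by auto
  ultimately show False
    using \<zeta> by (auto simp: less_eq_complex_def less_complex_def)
qed

lemma mat_inverse_SomeE:
  fixes B :: "'a :: field mat"
  assumes B: "B \<in> carrier_mat n n" and "det B \<noteq> 0"
  obtains R where "mat_inverse B = Some R" "B * R = 1\<^sub>m n" "R * B = 1\<^sub>m n" "R \<in> carrier_mat n n"
proof (cases "mat_inverse B")
  case None
  then show ?thesis
    using mat_inverse(1)[OF B None, where b = "()"] det_non_zero_imp_unit[OF assms, where b = "()"]
    by simp
next
  case (Some R)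
  then show ?thesis
    using mat_inverse(2)[OF B Some] that by blast
qed

lemma mat_inverse_eqI:
  fixes B C :: "'a :: field mat"
  assumes B: "B \<in> carrier_mat n n" and C: "C \<in> carrier_mat n n" and BC: "B * C = 1\<^sub>m n"
  shows "mat_inverse B = Some C"
proof -
  have "det B \<noteq> 0"
    using det_mult[OF B C] BC by auto
  then obtain R where R: "mat_inverse B = Some R" "R * B = 1\<^sub>m n" "R \<in> carrier_mat n n"
    using B mat_inverse_SomeE by metis
  have "R = R * (B * C)"
    using R(3) BC by simp
  also have "\<dots> = C"
    using assoc_mult_mat[OF R(3) B C] R(2) C by simp
  finally show ?thesis
    using R(1) by simp
qed

lemma mat_inverse_adj_mat:
  fixes B :: "'a :: field mat"
  assumes B: "B \<in> carrier_mat n n" and "det B \<noteq> 0"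
  shows "mat_inverse B = Some ((1 / det B) \<cdot>\<^sub>m adj_mat B)"
  using assms adj_mat[OF B] by (intro mat_inverse_eqI[OF B]) (auto simp: mult_smult_distrib)

definition permute_mat :: "(nat \<Rightarrow> nat) \<Rightarrow> 'a mat \<Rightarrow> 'a mat" where
  "permute_mat \<sigma> A = mat (dim_row A) (dim_col A) (\<lambda>(r, s). A $$ (\<sigma> r, \<sigma> s))"

lemma permute_mat_carrier [simp]: "permute_mat \<sigma> A \<in> carrier_mat n k \<longleftrightarrow> A \<in> carrier_mat n k"
  unfolding carrier_mat_def by (simp add: permute_mat_def)

lemma dim_permute_mat [simp]:
  "dim_row (permute_mat \<sigma> A) = dim_row A" "dim_col (permute_mat \<sigma> A) = dim_col A"
  by (simp_all add: permute_mat_def)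

lemma index_permute_mat [simp]:
  "r < dim_row A \<Longrightarrow> s < dim_col A \<Longrightarrow> permute_mat \<sigma> A $$ (r, s) = A $$ (\<sigma> r, \<sigma> s)"
  by (simp add: permute_mat_def)

lemma permutes_lessThan_less: "\<sigma> permutes {..<n} \<Longrightarrow> r < n \<Longrightarrow> \<sigma> r < n"
  using permutes_in_image[of \<sigma> "{..<n}" r] by simp

lemma permute_mat_mult:
  fixes A B :: "'a :: comm_semiring_0 mat"
  assumes \<sigma>: "\<sigma> permutes {..<n}" and A: "A \<in> carrier_mat n n" and B: "B \<in> carrier_mat n n"
  shows "permute_mat \<sigma> (A * B) = permute_mat \<sigma> A * permute_mat \<sigma> B"
proof (rule eq_matI)
  fix r s assume "r < dim_row (permute_mat \<sigma> A * permute_mat \<sigma> B)"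
    and "s < dim_col (permute_mat \<sigma> A * permute_mat \<sigma> B)"
  then have r: "r < n" and s: "s < n"
    using A B by auto
  have "permute_mat \<sigma> (A * B) $$ (r, s) = (\<Sum>t<n. A $$ (\<sigma> r, t) * B $$ (t, \<sigma> s))"
    using A B r s permutes_lessThan_less[OF \<sigma>]
    by (simp add: scalar_prod_def atLeast0LessThan)
  also have "\<dots> = (\<Sum>t<n. A $$ (\<sigma> r, \<sigma> t) * B $$ (\<sigma> t, \<sigma> s))"
    by (rule sum.permute[OF \<sigma>, unfolded comp_def])
  also have "\<dots> = (permute_mat \<sigma> A * permute_mat \<sigma> B) $$ (r, s)"
    using A B r s by (simp add: scalar_prod_def atLeast0LessThan)
  finally show "permute_mat \<sigma> (A * B) $$ (r, s) = (permute_mat \<sigma> A * permute_mat \<sigma> B) $$ (r, s)" .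
qed (use A B in auto)

lemma permute_mat_minus:
  assumes \<sigma>: "\<sigma> permutes {..<n}" and "A \<in> carrier_mat n n" and "B \<in> carrier_mat n n"
  shows "permute_mat \<sigma> (A - B) = permute_mat \<sigma> A - permute_mat \<sigma> B"
  using assms permutes_lessThan_less[OF \<sigma>] by (intro eq_matI) auto

lemma permute_mat_smult:
  assumes \<sigma>: "\<sigma> permutes {..<n}" and "A \<in> carrier_mat n n"
  shows "permute_mat \<sigma> (c \<cdot>\<^sub>m A) = c \<cdot>\<^sub>m permute_mat \<sigma> A"
  using assms permutes_lessThan_less[OF \<sigma>] by (intro eq_matI) auto

lemma permute_mat_one:
  assumes \<sigma>: "\<sigma> permutes {..<n}"
  shows "permute_mat \<sigma> (1\<^sub>m n) = 1\<^sub>m n"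
  using permutes_lessThan_less[OF \<sigma>] permutes_inj[OF \<sigma>] by (intro eq_matI) (auto simp: inj_eq)

lemma permute_mat_adjoint:
  assumes \<sigma>: "\<sigma> permutes {..<n}" and "A \<in> carrier_mat n n"
  shows "permute_mat \<sigma> (mat_adjoint A) = mat_adjoint (permute_mat \<sigma> A)"
  using assms permutes_lessThan_less[OF \<sigma>] by (intro eq_matI) auto

lemma mat_inverse_permute_mat:
  fixes B :: "'a :: field mat"
  assumes \<sigma>: "\<sigma> permutes {..<n}" and B: "B \<in> carrier_mat n n" and "det B \<noteq> 0"
  shows "mat_inverse (permute_mat \<sigma> B) = map_option (permute_mat \<sigma>) (mat_inverse B)"
proof -
  obtain R where R: "mat_inverse B = Some R" "B * R = 1\<^sub>m n" "R \<in> carrier_mat n n"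
    using B \<open>det B \<noteq> 0\<close> mat_inverse_SomeE by metis
  have "permute_mat \<sigma> B * permute_mat \<sigma> R = 1\<^sub>m n"
    using permute_mat_mult[OF \<sigma> B R(3), symmetric] R(2) permute_mat_one[OF \<sigma>] by simp
  then show ?thesis
    using R B by (simp add: mat_inverse_eqI)
qed

lemma resolvent_P_eq_adj_mat:
  fixes z \<zeta> :: complex
  assumes A: "A \<in> carrier_mat n n" and \<zeta>: "Im \<zeta> \<noteq> 0"
  defines "B \<equiv> (A - z \<cdot>\<^sub>m 1\<^sub>m n) * mat_adjoint (A - z \<cdot>\<^sub>m 1\<^sub>m n) - \<zeta> \<cdot>\<^sub>m 1\<^sub>m n"
  shows "resolvent_P A z \<zeta> = (1 / det B) \<cdot>\<^sub>m adj_mat B"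
proof -
  have "B \<in> carrier_mat n n"
    unfolding B_def by (intro minus_carrier_mat) simp
  moreover have "det B \<noteq> 0"
    unfolding B_def using A \<zeta> by (intro det_gram_minus_nonreal_nonzero) auto
  ultimately show ?thesis
    using A by (simp add: resolvent_P_def B_def Let_def mat_inverse_adj_mat)
qed

lemma resolvent_P_carrier:
  "A \<in> carrier_mat n n \<Longrightarrow> Im \<zeta> \<noteq> 0 \<Longrightarrow> resolvent_P A z \<zeta> \<in> carrier_mat n n"
  by (simp add: resolvent_P_eq_adj_mat adj_mat_def)

lemma resolvent_P_permute_mat:
  assumes \<sigma>: "\<sigma> permutes {..<n}" and A: "A \<in> carrier_mat n n" and \<zeta>: "Im \<zeta> \<noteq> 0"
  shows "resolvent_P (permute_mat \<sigma> A) z \<zeta> = permute_mat \<sigma> (resolvent_P A z \<zeta>)"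
proof -
  define Y where "Y = A - z \<cdot>\<^sub>m 1\<^sub>m n"
  define B where "B = Y * mat_adjoint Y - \<zeta> \<cdot>\<^sub>m 1\<^sub>m n"
  have Y: "Y \<in> carrier_mat n n"
    using A by (simp add: Y_def minus_carrier_mat)
  have B: "B \<in> carrier_mat n n"
    unfolding B_def by (intro minus_carrier_mat) simp
  have "permute_mat \<sigma> A - z \<cdot>\<^sub>m 1\<^sub>m n = permute_mat \<sigma> Y"
    using A \<sigma> by (simp add: Y_def permute_mat_minus permute_mat_smult permute_mat_one)
  moreover have "permute_mat \<sigma> Y * mat_adjoint (permute_mat \<sigma> Y) - \<zeta> \<cdot>\<^sub>m 1\<^sub>m n = permute_mat \<sigma> B"
    using Y \<sigma> by (simp add: B_def permute_mat_minus permute_mat_smult permute_mat_one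
        permute_mat_mult permute_mat_adjoint mat_adjoint_carrier)
  moreover have "mat_inverse (permute_mat \<sigma> B) = map_option (permute_mat \<sigma>) (mat_inverse B)"
    using \<sigma> B det_gram_minus_nonreal_nonzero[OF Y \<zeta>] by (simp add: B_def mat_inverse_permute_mat)
  moreover have "mat_inverse B \<noteq> None"
    using B det_gram_minus_nonreal_nonzero[OF Y \<zeta>] by (simp add: B_def mat_inverse_adj_mat)
  ultimately show ?thesis
    using A by (auto simp: resolvent_P_def Y_def B_def)
qed

definition mat_measurable :: "'x measure \<Rightarrow> nat \<Rightarrow> ('x \<Rightarrow> complex mat) \<Rightarrow> bool" where
  "mat_measurable N n A \<longleftrightarrow>
     (\<forall>x. A x \<in> carrier_mat n n) \<and> (\<forall>r<n. \<forall>s<n. (\<lambda>x. A x $$ (r, s)) \<in> borel_measurable N)"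

lemma mat_measurableI:
  assumes "\<And>x. A x \<in> carrier_mat n n"
    and "\<And>r s. r < n \<Longrightarrow> s < n \<Longrightarrow> (\<lambda>x. A x $$ (r, s)) \<in> borel_measurable N"
  shows "mat_measurable N n A"
  using assms by (simp add: mat_measurable_def)

lemma mat_measurableD:
  assumes "mat_measurable N n A"
  shows "A x \<in> carrier_mat n n" and "dim_row (A x) = n" and "dim_col (A x) = n"
    and "r < n \<Longrightarrow> s < n \<Longrightarrow> (\<lambda>x. A x $$ (r, s)) \<in> borel_measurable N"
  using assms carrier_matD[of "A x" n n] by (auto simp: mat_measurable_def)

lemma mat_measurable_const: "C \<in> carrier_mat n n \<Longrightarrow> mat_measurable N n (\<lambda>_. C)"
  by (rule mat_measurableI) simp_all

lemma mat_measurable_minus: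
  assumes A: "mat_measurable N n A" and B: "mat_measurable N n B"
  shows "mat_measurable N n (\<lambda>x. A x - B x)"
proof (rule mat_measurableI)
  fix r s assume "r < n" "s < n"
  then have "(\<lambda>x. (A x - B x) $$ (r, s)) = (\<lambda>x. A x $$ (r, s) - B x $$ (r, s))"
    using mat_measurableD(2,3)[OF B] by (simp add: fun_eq_iff)
  then show "(\<lambda>x. (A x - B x) $$ (r, s)) \<in> borel_measurable N"
    using mat_measurableD(4)[OF A] mat_measurableD(4)[OF B] \<open>r < n\<close> \<open>s < n\<close> by simp
qed (rule minus_carrier_mat[OF mat_measurableD(1)[OF B]])

lemma mat_measurable_smult:
  assumes A: "mat_measurable N n A"
  shows "mat_measurable N n (\<lambda>x. c \<cdot>\<^sub>m A x)"
proof (rule mat_measurableI)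
  fix r s assume "r < n" "s < n"
  then have "(\<lambda>x. (c \<cdot>\<^sub>m A x) $$ (r, s)) = (\<lambda>x. c * A x $$ (r, s))"
    using mat_measurableD(2,3)[OF A] by (simp add: fun_eq_iff)
  then show "(\<lambda>x. (c \<cdot>\<^sub>m A x) $$ (r, s)) \<in> borel_measurable N"
    using mat_measurableD(4)[OF A] \<open>r < n\<close> \<open>s < n\<close> by simp
qed (use mat_measurableD(1)[OF A] in simp)

lemma mat_measurable_mult:
  assumes A: "mat_measurable N n A" and B: "mat_measurable N n B"
  shows "mat_measurable N n (\<lambda>x. A x * B x)"
proof (rule mat_measurableI)
  fix r s assume "r < n" "s < n"
  then have "(\<lambda>x. (A x * B x) $$ (r, s)) = (\<lambda>x. \<Sum>t<n. A x $$ (r, t) * B x $$ (t, s))"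
    using mat_measurableD(2,3)[OF A] mat_measurableD(2,3)[OF B]
    by (simp add: fun_eq_iff scalar_prod_def atLeast0LessThan)
  then show "(\<lambda>x. (A x * B x) $$ (r, s)) \<in> borel_measurable N"
    using mat_measurableD(4)[OF A] mat_measurableD(4)[OF B] \<open>r < n\<close> \<open>s < n\<close> by simp
qed (rule mult_carrier_mat[OF mat_measurableD(1)[OF A] mat_measurableD(1)[OF B]])

lemma mat_measurable_adjoint:
  assumes A: "mat_measurable N n A"
  shows "mat_measurable N n (\<lambda>x. mat_adjoint (A x))"
proof (rule mat_measurableI)
  fix r s assume "r < n" "s < n"
  then have "(\<lambda>x. mat_adjoint (A x) $$ (r, s)) = (\<lambda>x. cnj (A x $$ (s, r)))"
    using mat_measurableD(2,3)[OF A] by (simp add: fun_eq_iff)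
  moreover have "cnj \<in> borel_measurable borel"
    by (intro borel_measurable_continuous_onI continuous_intros)
  ultimately show "(\<lambda>x. mat_adjoint (A x) $$ (r, s)) \<in> borel_measurable N"
    using measurable_compose[OF mat_measurableD(4)[OF A]] \<open>r < n\<close> \<open>s < n\<close> by simp
qed (use mat_measurableD(1)[OF A] in \<open>simp add: mat_adjoint_carrier\<close>)

lemma mat_measurable_mat_delete:
  assumes A: "mat_measurable N n A"
  shows "mat_measurable N (n - 1) (\<lambda>x. mat_delete (A x) i j)"
proof (rule mat_measurableI)
  fix r s assume "r < n - 1" "s < n - 1"
  then have "(\<lambda>x. mat_delete (A x) i j $$ (r, s)) =
      (\<lambda>x. A x $$ (if r < i then r else Suc r, if s < j then s else Suc s))"
    using mat_measurableD(2,3)[OF A] by (simp add: fun_eq_iff mat_delete_def)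
  then show "(\<lambda>x. mat_delete (A x) i j $$ (r, s)) \<in> borel_measurable N"
    using mat_measurableD(4)[OF A] \<open>r < n - 1\<close> \<open>s < n - 1\<close> by simp
qed (rule mat_delete_carrier[OF mat_measurableD(1)[OF A]])

lemma borel_measurable_det:
  assumes A: "mat_measurable N n A"
  shows "(\<lambda>x. det (A x)) \<in> borel_measurable N"
proof -
  have "(\<lambda>x. det (A x)) =
      (\<lambda>x. \<Sum>p\<in>{p. p permutes {0..<n}}. signof p * (\<Prod>i = 0..<n. A x $$ (i, p i)))"
    using det_def'[OF mat_measurableD(1)[OF A]] by simp
  moreover have "p permutes {0..<n} \<Longrightarrow> i < n \<Longrightarrow> p i < n" for p i
    using permutes_lessThan_less[of p n] by (simp add: atLeast0LessThan)
  ultimately show ?thesis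
    using mat_measurableD(4)[OF A] by simp
qed

lemma borel_measurable_resolvent_P:
  assumes A: "mat_measurable N n A" and \<zeta>: "Im \<zeta> \<noteq> 0" and "r < n" "s < n"
  shows "(\<lambda>x. resolvent_P (A x) z \<zeta> $$ (r, s)) \<in> borel_measurable N"
proof -
  define B where "B x = (A x - z \<cdot>\<^sub>m 1\<^sub>m n) * mat_adjoint (A x - z \<cdot>\<^sub>m 1\<^sub>m n) - \<zeta> \<cdot>\<^sub>m 1\<^sub>m n" for x
  have B: "mat_measurable N n B"
    unfolding B_def
    by (intro mat_measurable_minus mat_measurable_mult mat_measurable_adjoint mat_measurable_const A)
      simp_all
  have "(\<lambda>x. resolvent_P (A x) z \<zeta> $$ (r, s)) = (\<lambda>x. cofactor (B x) s r / det (B x))"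
    using resolvent_P_eq_adj_mat[OF mat_measurableD(1)[OF A] \<zeta>] mat_measurableD(2,3)[OF B] assms
    by (simp add: fun_eq_iff B_def adj_mat_def)
  then show ?thesis
    unfolding cofactor_def
    using borel_measurable_det[OF B] borel_measurable_det[OF mat_measurable_mat_delete[OF B]] by simp
qed

lemma mod_add_right_inj:
  fixes x y k m :: nat
  assumes "x < m" "y < m"
  shows "(x + k) mod m = (y + k) mod m \<longleftrightarrow> x = y"
proof
  assume "(x + k) mod m = (y + k) mod m"
  then have "[x + k = y + k] (mod m)"
    by (simp only: cong_def)
  then have "[x = y] (mod m)"
    by (simp only: cong_add_rcancel_nat)
  then show "x = y"
    using assms by (rule cong_less_modulus_unique_nat)
qed simp

lemma index_periodic_band:
  assumes "0 < b" "r < m * b" "s < m * b"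
  shows "periodic_band (m * b) b e $$ (r, s) =
     (if s div b = r div b then e (0, r div b, r mod b, s mod b) else 0)
   + (if s div b = (r div b + m - 1) mod m then e (2, (r div b + m - 1) mod m, r mod b, s mod b) else 0)
   + (if s div b = (r div b + 1) mod m then e (1, (r div b + 1) mod m, r mod b, s mod b) else 0)"
  using assms by (simp add: periodic_band_def Let_def)

lemma periodic_band_indices:
  assumes "0 < b" "r < m * b" "s < m * b"
  shows "(0, r div b, r mod b, s mod b) \<in> block_index_set m b"
    and "(2, (r div b + m - 1) mod m, r mod b, s mod b) \<in> block_index_set m b"
    and "(1, (r div b + 1) mod m, r mod b, s mod b) \<in> block_index_set m b"
proof -
  have "0 < m" and "r div b < m"
    using assms by (auto intro: Nat.gr0I simp: less_mult_imp_div_less)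
  then show "(0, r div b, r mod b, s mod b) \<in> block_index_set m b"
    and "(2, (r div b + m - 1) mod m, r mod b, s mod b) \<in> block_index_set m b"
    and "(1, (r div b + 1) mod m, r mod b, s mod b) \<in> block_index_set m b"
    using \<open>0 < b\<close> by (auto simp: block_index_set_def)
qed

lemma periodic_band_carrier [simp]: "periodic_band n b e \<in> carrier_mat n n"
  by (simp add: periodic_band_def Let_def)

lemma periodic_band_restrict:
  assumes "0 < b"
  shows "periodic_band (m * b) b (restrict e (block_index_set m b)) = periodic_band (m * b) b e"
proof (rule eq_matI)
  fix r s assume "r < dim_row (periodic_band (m * b) b e)" and "s < dim_col (periodic_band (m * b) b e)"
  then have "r < m * b" and "s < m * b"
    by (simp_all add: carrier_matD[OF periodic_band_carrier])
  then show "periodic_band (m * b) b (restrict e (block_index_set m b)) $$ (r, s) =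
      periodic_band (m * b) b e $$ (r, s)"
    using periodic_band_indices[OF assms \<open>r < m * b\<close> \<open>s < m * b\<close>]
    unfolding index_periodic_band[OF assms \<open>r < m * b\<close> \<open>s < m * b\<close>]
    by (simp only: restrict_apply')
qed (simp_all add: carrier_matD[OF periodic_band_carrier])

lemma mat_measurable_periodic_band:
  assumes "0 < b"
  shows "mat_measurable (\<Pi>\<^sub>M k\<in>block_index_set m b. borel) (m * b) (periodic_band (m * b) b)"
proof (rule mat_measurableI)
  fix r s assume "r < m * b" "s < m * b"
  then show "(\<lambda>e. periodic_band (m * b) b e $$ (r, s)) \<in> borel_measurable (\<Pi>\<^sub>M k\<in>block_index_set m b. borel)"
    using assms periodic_band_indices[OF assms] by (simp add: index_periodic_band)
qed simp

definition block_shift :: "nat \<Rightarrow> nat \<Rightarrow> nat \<Rightarrow> nat \<Rightarrow> nat \<Rightarrow> nat" where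
  "block_shift m b p q r = (if r < m * b then (r div b + p) mod m * b + (r mod b + q) mod b else r)"

definition entry_shift :: "nat \<Rightarrow> nat \<Rightarrow> nat \<Rightarrow> nat \<Rightarrow> nat \<times> nat \<times> nat \<times> nat \<Rightarrow> nat \<times> nat \<times> nat \<times> nat" where
  "entry_shift m b p q = (\<lambda>(k, j, a, c). (k, (j + p) mod m, (a + q) mod b, (c + q) mod b))"

lemma block_shift_div_mod_less:
  assumes "0 < b" "r < m * b"
  shows "block_shift m b p q r div b = (r div b + p) mod m"
    and "block_shift m b p q r mod b = (r mod b + q) mod b"
    and "block_shift m b p q r < m * b"
proof -
  have "0 < m"
    using assms by (cases m) auto
  then have "(r div b + p) mod m + 1 \<le> m"
    by (simp add: Suc_le_eq)
  then have "((r div b + p) mod m + 1) * b \<le> m * b"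
    by (rule mult_right_mono) simp
  then show "block_shift m b p q r < m * b"
    using assms mod_less_divisor[OF \<open>0 < b\<close>, of "r mod b + q"] by (simp add: block_shift_def)
  show "block_shift m b p q r div b = (r div b + p) mod m"
    and "block_shift m b p q r mod b = (r mod b + q) mod b"
    using assms by (simp_all add: block_shift_def)
qed

lemma block_shift_permutes:
  assumes "0 < b"
  shows "block_shift m b p q permutes {..<m * b}"
proof (rule bij_imp_permutes)
  have "inj_on (block_shift m b p q) {..<m * b}"
  proof (rule inj_onI)
    fix r s assume r: "r \<in> {..<m * b}" and s: "s \<in> {..<m * b}"
      and eq: "block_shift m b p q r = block_shift m b p q s"
    then have "(r div b + p) mod m = (s div b + p) mod m" "(r mod b + q) mod b = (s mod b + q) mod b"
      using block_shift_div_mod_less[OF assms] by (metis lessThan_iff)+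
    moreover have "r div b < m" "s div b < m"
      using r s by (auto simp: less_mult_imp_div_less)
    ultimately have "r div b = s div b" "r mod b = s mod b"
      using assms by (simp_all add: mod_add_right_inj)
    then show "r = s"
      by (metis div_mult_mod_eq)
  qed
  moreover have "block_shift m b p q ` {..<m * b} \<subseteq> {..<m * b}"
    using block_shift_div_mod_less(3)[OF assms] by auto
  ultimately show "bij_betw (block_shift m b p q) {..<m * b} {..<m * b}"
    by (simp add: bij_betw_def endo_inj_surj)
qed (simp add: block_shift_def)

lemma block_shift_0:
  assumes "0 < b" "i < m * b"
  shows "block_shift m b (i div b) (i mod b) 0 = i"
proof -
  have "i div b < m"
    using assms by (simp add: less_mult_imp_div_less)
  then show ?thesis
    using assms by (simp add: block_shift_def)
qed

lemma entry_shift_funcset: "entry_shift m b p q \<in> block_index_set m b \<rightarrow> block_index_set m b"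
  by (auto simp: entry_shift_def block_index_set_def)

lemma inj_on_entry_shift: "inj_on (entry_shift m b p q) (block_index_set m b)"
  by (rule inj_onI) (auto simp: entry_shift_def block_index_set_def mod_add_right_inj)

lemma periodic_band_entry_shift:
  assumes "0 < b"
  shows "periodic_band (m * b) b (e \<circ> entry_shift m b p q) =
    permute_mat (block_shift m b p q) (periodic_band (m * b) b e)"
proof (rule eq_matI)
  let ?rot = "\<lambda>x. (x + p) mod m"
  fix r s assume "r < dim_row (permute_mat (block_shift m b p q) (periodic_band (m * b) b e))"
    and "s < dim_col (permute_mat (block_shift m b p q) (periodic_band (m * b) b e))"
  then have r: "r < m * b" and s: "s < m * b"
    by (simp_all add: carrier_matD[OF periodic_band_carrier])
  define i j where "i = r div b" and "j = s div b"
  define a c where "a = (r mod b + q) mod b" and "c = (s mod b + q) mod b"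
  have "0 < m" "i < m" "j < m"
    using r s by (auto intro: Nat.gr0I simp: i_def j_def less_mult_imp_div_less)
  obtain m' where m': "m = Suc m'"
    using \<open>0 < m\<close> by (cases m) auto
  have pred: "?rot ((i + m - 1) mod m) = (?rot i + m - 1) mod m"
    by (simp add: m' mod_simps ac_simps)
  have succ: "?rot ((i + 1) mod m) = (?rot i + 1) mod m"
    by (simp add: mod_simps ac_simps)
  have same: "?rot j = ?rot i \<longleftrightarrow> j = i"
    using \<open>j < m\<close> \<open>i < m\<close> by (rule mod_add_right_inj)
  have below: "?rot j = (?rot i + m - 1) mod m \<longleftrightarrow> j = (i + m - 1) mod m"
    unfolding pred[symmetric] using \<open>0 < m\<close> \<open>j < m\<close> by (intro mod_add_right_inj) simp_all
  have above: "?rot j = (?rot i + 1) mod m \<longleftrightarrow> j = (i + 1) mod m"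
    unfolding succ[symmetric] using \<open>0 < m\<close> \<open>j < m\<close> by (intro mod_add_right_inj) simp_all
  have "periodic_band (m * b) b (e \<circ> entry_shift m b p q) $$ (r, s) =
      (if j = i then e (0, ?rot i, a, c) else 0)
    + (if j = (i + m - 1) mod m then e (2, ?rot ((i + m - 1) mod m), a, c) else 0)
    + (if j = (i + 1) mod m then e (1, ?rot ((i + 1) mod m), a, c) else 0)"
    using assms r s by (simp add: index_periodic_band entry_shift_def i_def j_def a_def c_def)
  also have "\<dots> =
      (if ?rot j = ?rot i then e (0, ?rot i, a, c) else 0)
    + (if ?rot j = (?rot i + m - 1) mod m then e (2, (?rot i + m - 1) mod m, a, c) else 0)
    + (if ?rot j = (?rot i + 1) mod m then e (1, (?rot i + 1) mod m, a, c) else 0)"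
    by (simp only: same below above pred succ)
  also have "\<dots> = permute_mat (block_shift m b p q) (periodic_band (m * b) b e) $$ (r, s)"
    using assms r s
    by (simp add: index_periodic_band block_shift_div_mod_less carrier_matD[OF periodic_band_carrier]
        i_def j_def a_def c_def)
  finally show "periodic_band (m * b) b (e \<circ> entry_shift m b p q) $$ (r, s) =
      permute_mat (block_shift m b p q) (periodic_band (m * b) b e) $$ (r, s)" .
qed (simp_all add: carrier_matD[OF periodic_band_carrier])

lemma resolvent_P_periodic_band_entry_shift:
  assumes "0 < b" "i < m * b" "Im \<zeta> \<noteq> 0"
  shows "resolvent_P (c \<cdot>\<^sub>m periodic_band (m * b) b
      (\<lambda>k\<in>block_index_set m b. e (entry_shift m b (i div b) (i mod b) k))) z \<zeta> $$ (0, 0)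
    = resolvent_P (c \<cdot>\<^sub>m periodic_band (m * b) b e) z \<zeta> $$ (i, i)"
proof -
  let ?\<sigma> = "block_shift m b (i div b) (i mod b)"
  let ?e = "e \<circ> entry_shift m b (i div b) (i mod b)"
  have \<sigma>: "?\<sigma> permutes {..<m * b}"
    using assms(1) by (rule block_shift_permutes)
  have "periodic_band (m * b) b (\<lambda>k\<in>block_index_set m b. e (entry_shift m b (i div b) (i mod b) k))
      = periodic_band (m * b) b ?e"
    using periodic_band_restrict[OF assms(1), of m ?e] by (simp add: comp_def)
  then have "c \<cdot>\<^sub>m periodic_band (m * b) b (\<lambda>k\<in>block_index_set m b. e (entry_shift m b (i div b) (i mod b) k))
      = permute_mat ?\<sigma> (c \<cdot>\<^sub>m periodic_band (m * b) b e)"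
    using assms(1) permute_mat_smult[OF \<sigma> periodic_band_carrier] by (simp add: periodic_band_entry_shift)
  then have "resolvent_P (c \<cdot>\<^sub>m periodic_band (m * b) b
      (\<lambda>k\<in>block_index_set m b. e (entry_shift m b (i div b) (i mod b) k))) z \<zeta>
      = permute_mat ?\<sigma> (resolvent_P (c \<cdot>\<^sub>m periodic_band (m * b) b e) z \<zeta>)"
    using resolvent_P_permute_mat[OF \<sigma> _ assms(3)] by simp
  moreover have "0 < m * b"
    using assms(2) by linarith
  ultimately show ?thesis
    using block_shift_0[OF assms(1,2)] resolvent_P_carrier[of "c \<cdot>\<^sub>m periodic_band (m * b) b e" "m * b" \<zeta> z]
      assms(3)
    by simp
qed

lemma borel_measurable_resolvent_P_periodic_band:
  assumes "0 < b" "r < m * b" "s < m * b" "Im \<zeta> \<noteq> 0"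
  shows "(\<lambda>e. resolvent_P (c \<cdot>\<^sub>m periodic_band (m * b) b e) z \<zeta> $$ (r, s))
    \<in> borel_measurable (\<Pi>\<^sub>M k\<in>block_index_set m b. borel)"
  using assms mat_measurable_smult[OF mat_measurable_periodic_band[OF assms(1)]]
  by (intro borel_measurable_resolvent_P) auto

lemma (in prob_space) integral_indep_vars_reindex:
  fixes E :: "'i \<Rightarrow> 'a \<Rightarrow> 'b" and g :: "('i \<Rightarrow> 'b) \<Rightarrow> 'c :: {banach, second_countable_topology}"
  assumes indep: "indep_vars (\<lambda>_. N) E I"
    and \<pi>: "inj_on \<pi> I" "\<pi> \<in> I \<rightarrow> I"
    and distr_eq: "\<And>k. k \<in> I \<Longrightarrow> distr M N (E (\<pi> k)) = distr M N (E k)"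
    and g: "g \<in> borel_measurable (\<Pi>\<^sub>M k\<in>I. N)"
  shows "(\<integral>\<omega>. g (\<lambda>k\<in>I. E (\<pi> k) \<omega>) \<partial>M) = (\<integral>\<omega>. g (\<lambda>k\<in>I. E k \<omega>) \<partial>M)"
proof (cases "I = {}")
  case False
  let ?P = "\<Pi>\<^sub>M k\<in>I. N"
  let ?L = "\<Pi>\<^sub>M k\<in>I. distr M N (E k)"
  let ?\<Phi> = "\<lambda>\<omega>. \<lambda>k\<in>I. E k \<omega>"
  let ?T = "\<lambda>x. \<lambda>k\<in>I. x (\<pi> k)"
  have rv: "random_variable N (E k)" if "k \<in> I" for k
    using indep that by (auto simp: indep_vars_def)
  have sets_L: "sets ?L = sets ?P"
    by (intro sets_PiM_cong) simp_all
  have \<Phi>: "?\<Phi> \<in> measurable M ?P" and distr_\<Phi>: "distr M ?P ?\<Phi> = ?L"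
    using rv indep indep_vars_iff_distr_eq_PiM'[OF False rv] by (auto intro!: measurable_restrict)
  have \<pi>_I: "\<pi> k \<in> I" if "k \<in> I" for k
    using \<pi>(2) that by auto
  then have T: "?T \<in> measurable ?L ?L"
    by (auto simp: measurable_cong_sets[OF sets_L sets_L]
        intro!: measurable_restrict measurable_component_singleton)
  have L_eq: "(\<Pi>\<^sub>M k\<in>I. distr M N (E (\<pi> k))) = ?L"
    using distr_eq by (intro PiM_cong) simp_all
  have "distr ?L (\<Pi>\<^sub>M k\<in>I. distr M N (E (\<pi> k))) ?T = (\<Pi>\<^sub>M k\<in>I. distr M N (E (\<pi> k)))"
    using \<pi> rv by (intro distr_PiM_reindex prob_space_distr) auto
  then have distr_T: "distr ?L ?L ?T = ?L"
    by (simp only: L_eq)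
  have g_L: "g \<in> borel_measurable ?L"
    using g by (simp add: measurable_cong_sets[OF sets_L refl])
  have g_T: "(\<lambda>x. g (?T x)) \<in> borel_measurable ?P"
    using measurable_compose[OF T g_L] by (simp add: measurable_cong_sets[OF sets_L refl])
  have "(\<integral>\<omega>. g (\<lambda>k\<in>I. E (\<pi> k) \<omega>) \<partial>M) = (\<integral>\<omega>. g (?T (?\<Phi> \<omega>)) \<partial>M)"
    by (intro Bochner_Integration.integral_cong arg_cong[where f = g] restrict_ext) (simp_all add: \<pi>_I)
  also have "\<dots> = (\<integral>x. g (?T x) \<partial>?L)"
    using integral_distr[OF \<Phi> g_T] distr_\<Phi> by simp
  also have "\<dots> = (\<integral>x. g x \<partial>?L)"
    using integral_distr[OF T g_L] distr_T by simp
  also have "\<dots> = (\<integral>\<omega>. g (?\<Phi> \<omega>) \<partial>M)"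
    using integral_distr[OF \<Phi>, of g] g distr_\<Phi> by simp
  finally show ?thesis .
qed (simp add: restrict_def)

theorem lemmaA8:
  fixes M :: "'w measure" and \<xi> :: "'w \<Rightarrow> complex"
    and E :: "nat \<times> nat \<times> nat \<times> nat \<Rightarrow> 'w \<Rightarrow> complex"
    and n b :: nat and z \<zeta> :: complex
  assumes "prob_space M"
    and "\<xi> \<in> borel_measurable M"
    and "integrable M \<xi>" and "integral\<^sup>L M \<xi> = 0"
    and "integrable M (\<lambda>\<omega>. (cmod (\<xi> \<omega>))\<^sup>2)" and "integral\<^sup>L M (\<lambda>\<omega>. (cmod (\<xi> \<omega>))\<^sup>2) = 1"
    and "\<exists>\<epsilon>>0. integrable M (\<lambda>\<omega>. cmod (\<xi> \<omega>) powr (4 + \<epsilon>))"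
    and "0 < b" and "b dvd n"
    and "prob_space.indep_vars M (\<lambda>_. borel) E (block_index_set (n div b) b)"
    and "\<forall>k \<in> block_index_set (n div b) b. distr M borel (E k) = distr M borel \<xi>"
    and "0 < Im \<zeta>"
  shows "\<forall>i < n.
    integral\<^sup>L M (\<lambda>\<omega>. resolvent_P ((1 / complex_of_real (sqrt (3 * real b))) \<cdot>\<^sub>m
                       periodic_band n b (\<lambda>k. E k \<omega>)) z \<zeta> $$ (i, i))
  = integral\<^sup>L M (\<lambda>\<omega>. resolvent_P ((1 / complex_of_real (sqrt (3 * real b))) \<cdot>\<^sub>m
                       periodic_band n b (\<lambda>k. E k \<omega>)) z \<zeta> $$ (0, 0))"
proof (intro allI impI)
  fix i assume "i < n"
  interpret prob_space M by fact
  let ?c = "1 / complex_of_real (sqrt (3 * real b))"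
  let ?R = "\<lambda>e r. resolvent_P (?c \<cdot>\<^sub>m periodic_band n b e) z \<zeta> $$ (r, r)"
  define m where "m = n div b"
  define \<pi> where "\<pi> = entry_shift m b (i div b) (i mod b)"
  have n: "n = m * b" and \<pi>: "\<pi> \<in> block_index_set m b \<rightarrow> block_index_set m b"
    using \<open>b dvd n\<close> by (simp_all add: m_def \<pi>_def entry_shift_funcset)
  have \<zeta>: "Im \<zeta> \<noteq> 0"
    using \<open>0 < Im \<zeta>\<close> by simp
  have shift: "?R (\<lambda>k\<in>block_index_set m b. E (\<pi> k) \<omega>) 0 = ?R (\<lambda>k. E k \<omega>) i" for \<omega>
    unfolding n \<pi>_def using \<open>0 < b\<close> \<open>i < n\<close> \<zeta> n
    by (intro resolvent_P_periodic_band_entry_shift) simp_all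
  have "(\<integral>\<omega>. ?R (\<lambda>k. E k \<omega>) i \<partial>M) = (\<integral>\<omega>. ?R (\<lambda>k\<in>block_index_set m b. E (\<pi> k) \<omega>) 0 \<partial>M)"
    by (simp only: shift)
  also have "\<dots> = (\<integral>\<omega>. ?R (\<lambda>k\<in>block_index_set m b. E k \<omega>) 0 \<partial>M)"
  proof (rule integral_indep_vars_reindex[where N = borel and g = "\<lambda>e. ?R e 0"])
    show "indep_vars (\<lambda>_. borel) E (block_index_set m b)"
      using assms(10) by (simp add: m_def)
    show "distr M borel (E (\<pi> k)) = distr M borel (E k)" if "k \<in> block_index_set m b" for k
      using assms(11) \<pi> that by (auto simp: m_def)
    show "inj_on \<pi> (block_index_set m b)"
      by (simp add: \<pi>_def inj_on_entry_shift)
    have "0 < m * b"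
      using \<open>i < n\<close> n by linarith
    then show "(\<lambda>e. ?R e 0) \<in> borel_measurable (\<Pi>\<^sub>M k\<in>block_index_set m b. borel)"
      using \<open>0 < b\<close> \<zeta> by (simp add: n borel_measurable_resolvent_P_periodic_band)
  qed (fact \<pi>)
  also have "\<dots> = (\<integral>\<omega>. ?R (\<lambda>k. E k \<omega>) 0 \<partial>M)"
    using \<open>0 < b\<close> by (simp add: n periodic_band_restrict)
  finally show "(\<integral>\<omega>. ?R (\<lambda>k. E k \<omega>) i \<partial>M) = (\<integral>\<omega>. ?R (\<lambda>k. E k \<omega>) 0 \<partial>M)" .
qed

end
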